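(* Fix integers $n\ge2$ and $1\le r\le n/2$. For every integer $2\le x\le n$, \[ q_r(x)\le\Big(1+\frac{r^x}{(n-r)^x}\Big)\Big(1-\frac xn\Big)^r \quad\text{and}\quad q_r(x)\le 1-2\frac rn\Big(1-\frac rn\Big). \] Furthermore, for any random variable $X$ with values in $\{0,\dots,n\}$, \[ \mathbb{E}q_r(X)\le 1-\frac rn\mathbb{E}X1(X\ge2)+\frac{r^2}{(n-r)^2}\mathbb{P}(X\ge2)+\frac12\frac{r^2}{n^2}\mathbb{E}X^21(X\ge2) \] and \[ \mathbb{E}q_r(X)\le\mathbb{P}(X<2)+e^{-2\frac rn(1-\frac rn)}\mathbb{P}(X\ge2). \]
   Context: For integers $1\le r\le n/2$ and $0\le x\le n$, $q_r(x)$ denotes the probability that a subset of size $x$ sampled uniformly at random from $\{1,\dots,n\}$ is either fully contained in $\{1,\dots,r\}$ or fully contained in $\{r+1,\dots,n\}$ (so $q_r(x)=1$ for $x\le1$). *)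

theory Defs
  imports "HOL-Probability.Probability"
begin

text \<open>q n r x: probability that a uniformly random x-subset of {1..n} is contained
  in {1..r} or in {r+1..n}.\<close>
definition q :: "nat \<Rightarrow> nat \<Rightarrow> nat \<Rightarrow> real" where
  "q n r x = real (card {S. S \<subseteq> {1..n} \<and> card S = x \<and>
                           (S \<subseteq> {1..r} \<or> S \<subseteq> {r+1..n})})
             / real (n choose x)"

end

theory Submission imports Defs begin

text \<open>Counting the two kinds of admissible subsets gives
  \<open>q n r x = (C(r,x) + C(n-r,x)) / C(n,x)\<close>. Removing one element from a ground set of size
  \<open>m \<le> n\<close> multiplies the number of \<open>x\<close>-subsets by \<open>(m-x)/m \<le> 1 - x/n\<close>, so
  \<open>C(n-r,x) \<le> C(n,x) (1-x/n)^r\<close>; term by term \<open>C(r,x) (n-r)^x \<le> r^x C(n-r,x)\<close>. The ratios \<open>C(m,x)/C(n,x)\<close>, \<open>m \<le> n\<close>, decrease in \<open>x\<close>,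
  so \<open>q n r x \<le> q n r 2 = 1 - 2r(n-r)/(n(n-1))\<close>, which gives the second bound. The bounds on
  the expectations follow by averaging pointwise bounds, using
  \<open>(1-y)^r \<le> 1 - ry + r\<^sup>2y\<^sup>2/2\<close> for the first and \<open>1 - s \<le> e\<^sup>-\<^sup>s\<close> for the second.\<close>

lemma Suc_times_choose_Suc:
  "real (Suc k) * real (m choose Suc k) = real (m - k) * real (m choose k)"
  by (metis binomial_absorption binomial_absorb_comp of_nat_mult)

lemma real_choose_two: "real (m choose 2) = real m * (real m - 1) / 2"
proof -
  have "2 * real (m choose 2) = real (m - 1) * real m"
    using Suc_times_choose_Suc[of 1 m] by (simp only: Suc_1 choose_one of_nat_numeral)
  then show ?thesis by (cases m) (auto simp: algebra_simps)
qed

lemma choose_pred_le: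
  assumes "m \<le> n"
  shows "real ((m - 1) choose x) \<le> (1 - real x / real n) * real (m choose x)"
proof (cases "x \<le> m \<and> 0 < m")
  case True
  have "real m * real x \<le> real n * real x" using assms by (intro mult_right_mono) auto
  then have "real m * real x / real n \<le> real x" by (simp add: divide_le_eq mult.commute)
  then have "real (m - x) \<le> real m * (1 - real x / real n)"
    using True by (simp add: of_nat_diff right_diff_distrib)
  moreover have "real m * real ((m - 1) choose x) = real (m - x) * real (m choose x)"
    by (metis binomial_absorb_comp of_nat_mult)
  ultimately have "real m * real ((m - 1) choose x) \<le> real m * (1 - real x / real n) * real (m choose x)"
    by (simp add: mult_right_mono)
  then show ?thesis using True by (simp add: mult.assoc)
next
  case False
  then consider "m < x" | "m = 0" by linarith
  then show ?thesis
  proof cases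
    case 1
    then show ?thesis by (simp add: binomial_eq_0)
  next
    case 2
    then show ?thesis by (cases x) simp_all
  qed
qed

lemma choose_diff_le_power:
  assumes "x \<le> n"
  shows "real ((n - k) choose x) \<le> (1 - real x / real n) ^ k * real (n choose x)"
proof (induction k)
  case 0
  then show ?case by simp
next
  case (Suc k)
  have "0 \<le> 1 - real x / real n" using assms by (auto simp: divide_le_eq_1)
  have "n - Suc k = n - k - 1" by simp
  then have "real ((n - Suc k) choose x) \<le> (1 - real x / real n) * real ((n - k) choose x)"
    using choose_pred_le[of "n - k" n x] by simp
  also have "\<dots> \<le> (1 - real x / real n) * ((1 - real x / real n) ^ k * real (n choose x))"
    using Suc.IH \<open>0 \<le> 1 - real x / real n\<close> by (rule mult_left_mono)
  finally show ?case by (simp only: power_Suc mult.assoc)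
qed

lemma choose_times_power_le:
  assumes "a \<le> b"
  shows "real (a choose x) * real b ^ x \<le> real a ^ x * real (b choose x)"
proof (induction x)
  case 0
  then show ?case by simp
next
  case (Suc x)
  have step: "real (a - x) * real b \<le> real a * real (b - x)"
  proof (cases "x \<le> a")
    case True
    have "real x * real a \<le> real x * real b" using assms by (simp add: mult_left_mono)
    then show ?thesis using True assms by (simp add: of_nat_diff algebra_simps)
  qed simp
  have "real (Suc x) * (real (a choose Suc x) * real b ^ Suc x)
      = (real (a - x) * real b) * (real (a choose x) * real b ^ x)"
    by (simp only: mult.assoc[symmetric] Suc_times_choose_Suc) (simp add: mult_ac)
  also have "\<dots> \<le> (real a * real (b - x)) * (real a ^ x * real (b choose x))"
    by (rule mult_mono[OF step Suc.IH]) simp_all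
  also have "\<dots> = real (Suc x) * (real a ^ Suc x * real (b choose Suc x))"
    by (simp only: mult.left_commute[of "real (Suc x)"] Suc_times_choose_Suc) (simp add: mult_ac)
  finally show ?case by (simp only: mult_le_cancel_left_pos of_nat_0_less_iff zero_less_Suc simp_thms)
qed

lemma choose_ratio_Suc_le:
  assumes "m \<le> n" and "Suc x \<le> n"
  shows "real (m choose Suc x) / real (n choose Suc x) \<le> real (m choose x) / real (n choose x)"
proof -
  have "real (Suc x) * (real (m choose Suc x) * real (n choose x))
      = real (m - x) * real (m choose x) * real (n choose x)"
    by (simp only: mult.assoc[symmetric] Suc_times_choose_Suc)
  also have "\<dots> \<le> real (n - x) * real (m choose x) * real (n choose x)"
    using assms by (intro mult_right_mono) auto
  also have "\<dots> = real (m choose x) * (real (Suc x) * real (n choose Suc x))"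
    by (simp only: Suc_times_choose_Suc mult_ac)
  finally have "real (m choose Suc x) * real (n choose x) \<le> real (m choose x) * real (n choose Suc x)"
    by (simp only: mult.left_commute[of _ "real (Suc x)"] mult_le_cancel_left_pos of_nat_0_less_iff
        zero_less_Suc simp_thms)
  moreover have "0 < real (n choose Suc x)" "0 < real (n choose x)" using assms by auto
  ultimately show ?thesis by (simp add: divide_simps)
qed

lemma one_minus_power_le_quadratic:
  fixes y :: real
  assumes "0 \<le> y" and "y \<le> 1"
  shows "(1 - y) ^ k \<le> 1 - real k * y + real k ^ 2 * y ^ 2 / 2"
proof (induction k)
  case 0
  then show ?case by simp
next
  case (Suc k)
  have "(1 - y) ^ Suc k \<le> (1 - y) * (1 - real k * y + real k ^ 2 * y ^ 2 / 2)"
    using Suc assms by (simp add: mult_left_mono)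
  also have "\<dots> \<le> 1 - real (Suc k) * y + real (Suc k) ^ 2 * y ^ 2 / 2"
    using assms by (simp add: algebra_simps power2_eq_square power3_eq_cube)
  finally show ?case .
qed

lemma q_le_one: "q n r x \<le> 1"
proof -
  have "{S. S \<subseteq> {1..n} \<and> card S = x \<and> (S \<subseteq> {1..r} \<or> S \<subseteq> {r+1..n})}
      \<subseteq> {S. S \<subseteq> {1..n} \<and> card S = x}" by blast
  then have "card {S. S \<subseteq> {1..n} \<and> card S = x \<and> (S \<subseteq> {1..r} \<or> S \<subseteq> {r+1..n})}
      \<le> card {S. S \<subseteq> {1..n} \<and> card S = x}"
    by (intro card_mono) (auto intro: finite_subset[of _ "Pow {1..n}"])
  also have "\<dots> = n choose x" using n_subsets[of "{1..n}" x] by simp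
  finally show ?thesis unfolding q_def by (cases "n choose x = 0") (auto simp: divide_le_eq)
qed

lemma q_eq_choose:
  assumes "1 \<le> x" and "r \<le> n"
  shows "q n r x = (real (r choose x) + real ((n - r) choose x)) / real (n choose x)"
proof -
  let ?L = "{S. S \<subseteq> {1..r} \<and> card S = x}" and ?R = "{S. S \<subseteq> {r+1..n} \<and> card S = x}"
  have split: "{S. S \<subseteq> {1..n} \<and> card S = x \<and> (S \<subseteq> {1..r} \<or> S \<subseteq> {r+1..n})} = ?L \<union> ?R"
    using assms by auto
  have "?L \<inter> ?R = {}"
  proof (intro equals0I)
    fix S assume "S \<in> ?L \<inter> ?R"
    then have "S = {}" by fastforce
    with \<open>S \<in> ?L \<inter> ?R\<close> \<open>1 \<le> x\<close> show False by simp
  qed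
  moreover have "finite ?L" by (auto intro: finite_subset[of _ "Pow {1..r}"])
  moreover have "finite ?R" by (auto intro: finite_subset[of _ "Pow {r+1..n}"])
  ultimately have "card (?L \<union> ?R) = (r choose x) + ((n - r) choose x)"
    using n_subsets[of "{1..r}" x] n_subsets[of "{r+1..n}" x] by (simp add: card_Un_disjoint)
  then show ?thesis unfolding q_def split by simp
qed

lemma q_le_power_bound:
  assumes "2 * r \<le> n" and "1 \<le> x" and "x \<le> n"
  shows "q n r x \<le> (1 + real r ^ x / (real n - real r) ^ x) * (1 - real x / real n) ^ r"
proof -
  define t where "t = real r ^ x / (real n - real r) ^ x"
  have "real n - real r > 0" using assms by simp
  then have "0 \<le> t" by (simp add: t_def)
  have "real (r choose x) * (real n - real r) ^ x \<le> real r ^ x * real ((n - r) choose x)"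
    using choose_times_power_le[of r "n - r" x] assms by (simp add: of_nat_diff)
  then have r_part: "real (r choose x) \<le> t * real ((n - r) choose x)"
    using \<open>real n - real r > 0\<close> by (simp add: t_def field_simps)
  have choose_pos: "0 < real (n choose x)" using assms by simp
  have "q n r x = (real (r choose x) + real ((n - r) choose x)) / real (n choose x)"
    using assms by (intro q_eq_choose) auto
  also have "\<dots> \<le> (1 + t) * real ((n - r) choose x) / real (n choose x)"
    using r_part choose_pos by (intro divide_right_mono) (auto simp: algebra_simps)
  also have "\<dots> \<le> (1 + t) * ((1 - real x / real n) ^ r * real (n choose x)) / real (n choose x)"
    using choose_diff_le_power[OF \<open>x \<le> n\<close>, of r] choose_pos \<open>0 \<le> t\<close>
    by (intro divide_right_mono mult_left_mono) auto
  also have "\<dots> = (1 + t) * (1 - real x / real n) ^ r" using choose_pos by simp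
  finally show ?thesis by (simp add: t_def)
qed

lemma q_antimono:
  assumes "r \<le> n" and "1 \<le> x" and "x \<le> y" and "y \<le> n"
  shows "q n r y \<le> q n r x"
  using \<open>x \<le> y\<close> \<open>y \<le> n\<close>
proof (induction y rule: dec_induct)
  case base
  then show ?case by simp
next
  case (step y)
  have "q n r (Suc y) = real (r choose Suc y) / real (n choose Suc y)
      + real ((n - r) choose Suc y) / real (n choose Suc y)"
    using assms by (simp add: q_eq_choose add_divide_distrib)
  also have "\<dots> \<le> real (r choose y) / real (n choose y) + real ((n - r) choose y) / real (n choose y)"
    using assms step.prems by (intro add_mono choose_ratio_Suc_le) auto
  also have "\<dots> = q n r y"
    using assms step.hyps by (simp add: q_eq_choose add_divide_distrib)
  finally show ?case using step by simp
qed

lemma q_two: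
  assumes "r \<le> n" and "2 \<le> n"
  shows "q n r 2 = 1 - 2 * real r * (real n - real r) / (real n * (real n - 1))"
  using assms
  by (simp add: q_eq_choose real_choose_two of_nat_diff field_simps)

lemma q_le_one_minus_split_prob:
  assumes "r \<le> n" and "2 \<le> x" and "x \<le> n"
  shows "q n r x \<le> 1 - 2 * (real r / real n) * (1 - real r / real n)"
proof -
  have "q n r x \<le> 1 - 2 * real r * (real n - real r) / (real n * (real n - 1))"
    using q_antimono[of r n 2 x] q_two[of r n] assms by simp
  also have "\<dots> \<le> 1 - 2 * real r * (real n - real r) / (real n * real n)"
    using assms by (intro diff_left_mono divide_left_mono mult_mono) auto
  also have "\<dots> = 1 - 2 * (real r / real n) * (1 - real r / real n)"
    using assms by (simp add: field_simps)
  finally show ?thesis .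
qed

lemma q_le_quadratic:
  assumes "2 * r \<le> n" and "2 \<le> x" and "x \<le> n"
  shows "q n r x \<le> 1 - real r / real n * real x + (real r)^2 / (real n - real r)^2
           + 1/2 * (real r)^2 / (real n)^2 * (real x)^2"
proof -
  define y where "y = real x / real n"
  define t where "t = real r / (real n - real r)"
  have y: "0 \<le> y" "y \<le> 1" using assms by (auto simp: y_def field_simps)
  have t: "0 \<le> t" "t \<le> 1" using assms by (auto simp: t_def field_simps)
  have "q n r x \<le> (1 + t ^ x) * (1 - y) ^ r"
    using q_le_power_bound[of r n x] assms by (simp add: t_def y_def power_divide)
  also have "\<dots> = (1 - y) ^ r + t ^ x * (1 - y) ^ r" by (simp add: algebra_simps)
  also have "\<dots> \<le> (1 - real r * y + real r ^ 2 * y ^ 2 / 2) + t ^ 2"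
  proof (rule add_mono)
    show "(1 - y) ^ r \<le> 1 - real r * y + real r ^ 2 * y ^ 2 / 2"
      using y by (rule one_minus_power_le_quadratic)
    have "t ^ x * (1 - y) ^ r \<le> t ^ x" using y t by (simp add: mult_left_le power_le_one)
    also have "\<dots> \<le> t ^ 2" using t assms by (intro power_decreasing) auto
    finally show "t ^ x * (1 - y) ^ r \<le> t ^ 2" .
  qed
  also have "\<dots> = 1 - real r / real n * real x + (real r)^2 / (real n - real r)^2
           + 1/2 * (real r)^2 / (real n)^2 * (real x)^2"
    by (simp add: y_def t_def power_divide field_simps)
  finally show ?thesis .
qed

lemma pmf_expectation_mono:
  fixes f g :: "'a \<Rightarrow> real"
  assumes "finite (set_pmf X)" and "\<And>x. x \<in> set_pmf X \<Longrightarrow> f x \<le> g x"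
  shows "measure_pmf.expectation X f \<le> measure_pmf.expectation X g"
  using assms by (intro integral_mono_AE) (auto simp: AE_measure_pmf_iff integrable_measure_pmf_finite)

lemma expectation_q_le_quadratic:
  fixes X :: "nat pmf"
  assumes "2 * r \<le> n" and "set_pmf X \<subseteq> {0..n}"
  shows "measure_pmf.expectation X (q n r)
    \<le> 1 - real r / real n * measure_pmf.expectation X (\<lambda>x. if x \<ge> 2 then real x else 0)
       + (real r)^2 / (real n - real r)^2 * measure_pmf.prob X {x. x \<ge> 2}
       + 1/2 * (real r)^2 / (real n)^2 * measure_pmf.expectation X (\<lambda>x. if x \<ge> 2 then (real x)^2 else 0)"
proof -
  have fin: "finite (set_pmf X)" using assms(2) finite_subset by blast
  have "measure_pmf.expectation X (q n r) \<le> measure_pmf.expectation X (\<lambda>x.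
      1 - real r / real n * (if x \<ge> 2 then real x else 0)
        + (real r)^2 / (real n - real r)^2 * indicator {x. x \<ge> 2} x
        + 1/2 * (real r)^2 / (real n)^2 * (if x \<ge> 2 then (real x)^2 else 0))"
  proof (rule pmf_expectation_mono[OF fin])
    fix x assume "x \<in> set_pmf X"
    then have "x \<le> n" using assms(2) by auto
    then show "q n r x \<le> 1 - real r / real n * (if x \<ge> 2 then real x else 0)
        + (real r)^2 / (real n - real r)^2 * indicator {x. x \<ge> 2} x
        + 1/2 * (real r)^2 / (real n)^2 * (if x \<ge> 2 then (real x)^2 else 0)"
      using q_le_quadratic[OF assms(1)] q_le_one[of n r x] by (auto simp: indicator_def)
  qed
  also have "\<dots> = 1 - real r / real n * measure_pmf.expectation X (\<lambda>x. if x \<ge> 2 then real x else 0)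
       + (real r)^2 / (real n - real r)^2 * measure_pmf.prob X {x. x \<ge> 2}
       + 1/2 * (real r)^2 / (real n)^2 * measure_pmf.expectation X (\<lambda>x. if x \<ge> 2 then (real x)^2 else 0)"
    using fin by (simp add: integrable_measure_pmf_finite)
  finally show ?thesis .
qed

lemma expectation_q_le_exp:
  fixes X :: "nat pmf"
  assumes "r \<le> n" and "set_pmf X \<subseteq> {0..n}"
  shows "measure_pmf.expectation X (q n r)
    \<le> measure_pmf.prob X {x. x < 2}
       + exp (- 2 * (real r / real n) * (1 - real r / real n)) * measure_pmf.prob X {x. x \<ge> 2}"
proof -
  define s where "s = 2 * (real r / real n) * (1 - real r / real n)"
  have fin: "finite (set_pmf X)" using assms(2) finite_subset by blast
  have "measure_pmf.expectation X (q n r)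
      \<le> measure_pmf.expectation X (\<lambda>x. indicator {x. x < 2} x + exp (- s) * indicator {x. x \<ge> 2} x)"
  proof (rule pmf_expectation_mono[OF fin])
    fix x assume "x \<in> set_pmf X"
    then have "x \<le> n" using assms(2) by auto
    show "q n r x \<le> indicator {x. x < 2} x + exp (- s) * indicator {x. x \<ge> 2} x"
    proof (cases "2 \<le> x")
      case True
      have "q n r x \<le> 1 - s"
        using q_le_one_minus_split_prob[OF assms(1) True \<open>x \<le> n\<close>] by (simp add: s_def)
      also have "\<dots> \<le> exp (- s)" using exp_ge_add_one_self[of "- s"] by simp
      finally show ?thesis using True by simp
    next
      case False
      then show ?thesis using q_le_one[of n r x] by simp
    qed
  qed
  also have "\<dots> = measure_pmf.prob X {x. x < 2} + exp (- s) * measure_pmf.prob X {x. x \<ge> 2}"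
    using fin by (simp add: integrable_measure_pmf_finite)
  finally show ?thesis by (simp add: s_def)
qed

theorem mainTheorem12:
  fixes n r :: nat
  assumes "n \<ge> 2" and "1 \<le> r" and "2 * r \<le> n"
  shows "(\<forall>x. 2 \<le> x \<and> x \<le> n \<longrightarrow>
            q n r x \<le> (1 + real r ^ x / (real n - real r) ^ x) * (1 - real x / real n) ^ r
          \<and> q n r x \<le> 1 - 2 * (real r / real n) * (1 - real r / real n))
       \<and> (\<forall>X :: nat pmf. set_pmf X \<subseteq> {0..n} \<longrightarrow>
            measure_pmf.expectation X (q n r)
              \<le> 1 - real r / real n * measure_pmf.expectation X (\<lambda>x. if x \<ge> 2 then real x else 0)
                 + (real r)^2 / (real n - real r)^2 * measure_pmf.prob X {x. x \<ge> 2}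
                 + 1/2 * (real r)^2 / (real n)^2 * measure_pmf.expectation X (\<lambda>x. if x \<ge> 2 then (real x)^2 else 0)
          \<and> measure_pmf.expectation X (q n r)
              \<le> measure_pmf.prob X {x. x < 2}
                 + exp (- 2 * (real r / real n) * (1 - real r / real n)) * measure_pmf.prob X {x. x \<ge> 2})"
  using q_le_power_bound[OF assms(3)] q_le_one_minus_split_prob[of r n]
    expectation_q_le_quadratic[OF assms(3)] expectation_q_le_exp[of r n] assms(3)
  by auto

end
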